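(* The free group of rank $2$ is not weakly homogeneous.
   Context: A group $H$ is weakly homogeneous if for every isomorphism $\varphi:A\to B$ between finitely generated subgroups $A,B$ of $H$ such that both $\varphi$ and $\varphi^{-1}:B\to A$ extend to endomorphisms of $H$, the map $\varphi$ extends to an automorphism of $H$. *)

theory Defs
  imports "HOL-Algebra.Algebra"
begin

text \<open>Letters: (g, s) where g :: bool names one of the two free generators and
  s = True marks the formal inverse of that generator.\<close>

type_synonym letter2 = "bool \<times> bool"

definition inv_letter :: "letter2 \<Rightarrow> letter2" where
  "inv_letter l = (fst l, \<not> snd l)"

fun reduced :: "letter2 list \<Rightarrow> bool" where
  "reduced [] = True"
| "reduced [l] = True"
| "reduced (l # m # ws) = (m \<noteq> inv_letter l \<and> reduced (m # ws))"

fun cons_red :: "letter2 \<Rightarrow> letter2 list \<Rightarrow> letter2 list" where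
  "cons_red l [] = [l]"
| "cons_red l (m # ws) = (if m = inv_letter l then ws else l # m # ws)"

definition reduce :: "letter2 list \<Rightarrow> letter2 list" where
  "reduce ws = foldr cons_red ws []"

definition free_group2 :: "letter2 list monoid" where
  "free_group2 = \<lparr> carrier = {w. reduced w},
                   monoid.mult = (\<lambda>x y. reduce (x @ y)),
                   one = [] \<rparr>"

definition fg_subgroup :: "('a, 'b) monoid_scheme \<Rightarrow> 'a set \<Rightarrow> bool" where
  "fg_subgroup G A \<longleftrightarrow> (\<exists>S. finite S \<and> S \<subseteq> carrier G \<and> A = generate G S)"

definition weakly_homogeneous :: "('a, 'b) monoid_scheme \<Rightarrow> bool" where
  "weakly_homogeneous G \<longleftrightarrow>
    (\<forall>A B \<phi>. fg_subgroup G A \<and> fg_subgroup G B \<and>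
       \<phi> \<in> iso (G\<lparr>carrier := A\<rparr>) (G\<lparr>carrier := B\<rparr>) \<and>
       (\<exists>f \<in> hom G G. \<forall>a\<in>A. f a = \<phi> a) \<and>
       (\<exists>g \<in> hom G G. \<forall>b\<in>B. g b = inv_into A \<phi> b)
       \<longrightarrow> (\<exists>h \<in> iso G G. \<forall>a\<in>A. h a = \<phi> a))"

end

theory Submission imports Defs begin

text \<open>The endomorphism \<open>a \<mapsto> y, b \<mapsto> b\<close> of \<open>F\<^sub>2\<close> with \<open>y = a\<^sup>2 b a\<^sup>-\<^sup>1 b\<close> maps
  \<open>\<langle>a\<rangle>\<close> isomorphically onto \<open>\<langle>y\<rangle>\<close>, and the endomorphism \<open>a \<mapsto> a, b \<mapsto> 1\<close> inverts it there.
  Weak homogeneity would therefore give an automorphism sending \<open>a\<close> to \<open>y\<close>, i.e. a basis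
  \<open>(y, z)\<close> of \<open>F\<^sub>2\<close>. For a basis, \<open>\<phi> \<mapsto> (\<phi> y, \<phi> z)\<close> is a bijection from
  \<open>Hom(F\<^sub>2, H)\<close> onto \<open>H \<times> H\<close>, so every fibre of \<open>(p, q) \<mapsto> y(p, q)\<close> has at least \<open>|H|\<close>
  points. In \<open>H = S\<^sub>3\<close> only three pairs send \<open>y\<close> to a fixed 3-cycle.\<close>

lemma inv_letter_inv_letter [simp]: "inv_letter (inv_letter l) = l"
  by (simp add: inv_letter_def)

lemma inv_letter_neq [simp]: "inv_letter l \<noteq> l"
  by (cases l) (simp add: inv_letter_def)

lemma reduced_ConsD: "reduced (l # w) \<Longrightarrow> reduced w"
  by (cases w) auto

lemma reduced_cons_red: "reduced w \<Longrightarrow> reduced (cons_red l w)"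
  by (cases w) (auto dest: reduced_ConsD)

lemma reduced_foldr_cons_red: "reduced r \<Longrightarrow> reduced (foldr cons_red w r)"
  by (induction w) (auto intro: reduced_cons_red)

lemma reduced_reduce: "reduced (reduce w)"
  unfolding reduce_def by (rule reduced_foldr_cons_red) simp

lemma cons_red_reduced: "reduced (l # w) \<Longrightarrow> cons_red l w = l # w"
  by (cases w) auto

lemma reduce_reduced: "reduced w \<Longrightarrow> reduce w = w"
proof (induction w)
  case (Cons l w)
  then have "reduce w = w" by (auto dest: reduced_ConsD)
  then show ?case using cons_red_reduced[OF Cons.prems] by (simp add: reduce_def)
qed (simp add: reduce_def)

lemma cons_red_inv_cancel: "reduced r \<Longrightarrow> cons_red (inv_letter l) (cons_red l r) = r"
  by (cases r rule: reduced.cases) auto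

lemma foldr_cons_red_cons_red: "reduced r \<Longrightarrow>
  foldr cons_red (cons_red l v) r = cons_red l (foldr cons_red v r)"
proof (cases v)
  case (Cons m v')
  assume r: "reduced r"
  show ?thesis
  proof (cases "m = inv_letter l")
    case True
    then show ?thesis
      using Cons cons_red_inv_cancel[OF reduced_foldr_cons_red[OF r], of "inv_letter l" v'] by simp
  qed (use Cons in simp)
qed simp

lemma foldr_cons_red_reduce: "reduced r \<Longrightarrow> foldr cons_red (reduce w) r = foldr cons_red w r"
  by (induction w) (simp_all add: reduce_def foldr_cons_red_cons_red)

lemma reduce_append: "reduce (x @ y) = foldr cons_red x (reduce y)"
  by (simp add: reduce_def)

lemma reduce_reduce_append: "reduce (reduce x @ y) = reduce (x @ y)"
  by (simp add: reduce_append foldr_cons_red_reduce reduced_reduce)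

lemma reduce_append_reduce: "reduce (x @ reduce y) = reduce (x @ y)"
  by (simp add: reduce_append reduce_reduced reduced_reduce)

lemma reduce_inverse_append: "reduce (rev (map inv_letter w) @ w) = []"
proof -
  have "foldr cons_red (rev (map inv_letter w)) (foldr cons_red w r) = r" if "reduced r" for r
    using that
    by (induction w arbitrary: r) (simp_all add: cons_red_inv_cancel reduced_foldr_cons_red)
  then show ?thesis by (simp add: reduce_def)
qed

abbreviation F2 :: "letter2 list monoid" where "F2 \<equiv> free_group2"

lemma free_group2_simps [simp]:
  "carrier F2 = {w. reduced w}"
  "x \<otimes>\<^bsub>F2\<^esub> y = reduce (x @ y)"
  "\<one>\<^bsub>F2\<^esub> = []"
  by (simp_all add: free_group2_def)

lemma group_free_group2: "group F2"
proof (rule groupI)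
  fix x assume "x \<in> carrier F2"
  then show "\<exists>y\<in>carrier F2. y \<otimes>\<^bsub>F2\<^esub> x = \<one>\<^bsub>F2\<^esub>"
    by (intro bexI[of _ "reduce (rev (map inv_letter x))"])
      (simp_all add: reduce_reduce_append reduce_inverse_append reduced_reduce)
qed (simp_all add: reduced_reduce reduce_reduced reduce_reduce_append reduce_append_reduce)

abbreviation gen_a :: "letter2 list" where "gen_a \<equiv> [(True, False)]"
abbreviation gen_b :: "letter2 list" where "gen_b \<equiv> [(False, False)]"

lemma inv_free_group2_letter: "inv\<^bsub>F2\<^esub> [(x, False)] = [(x, True)]"
  by (rule group.inv_equality[OF group_free_group2]) (auto simp: reduce_def inv_letter_def)

section \<open>Evaluation of words and the universal property\<close>

definition eval_letter :: "('g, 'z) monoid_scheme \<Rightarrow> 'g \<Rightarrow> 'g \<Rightarrow> letter2 \<Rightarrow> 'g" where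
  "eval_letter H u v l = (let g = (if fst l then u else v) in if snd l then inv\<^bsub>H\<^esub> g else g)"

definition eval_word :: "('g, 'z) monoid_scheme \<Rightarrow> 'g \<Rightarrow> 'g \<Rightarrow> letter2 list \<Rightarrow> 'g" where
  "eval_word H u v w = foldr (\<lambda>l acc. eval_letter H u v l \<otimes>\<^bsub>H\<^esub> acc) w \<one>\<^bsub>H\<^esub>"

lemma eval_word_Nil [simp]: "eval_word H u v [] = \<one>\<^bsub>H\<^esub>"
  by (simp add: eval_word_def)

lemma eval_word_Cons [simp]:
  "eval_word H u v (l # w) = eval_letter H u v l \<otimes>\<^bsub>H\<^esub> eval_word H u v w"
  by (simp add: eval_word_def)

context group
begin

lemma eval_letter_closed [simp]:
  "u \<in> carrier G \<Longrightarrow> v \<in> carrier G \<Longrightarrow> eval_letter G u v l \<in> carrier G"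
  by (simp add: eval_letter_def Let_def)

lemma eval_word_closed [simp]:
  "u \<in> carrier G \<Longrightarrow> v \<in> carrier G \<Longrightarrow> eval_word G u v w \<in> carrier G"
  by (induction w) auto

lemma eval_word_gen_a [simp]: "u \<in> carrier G \<Longrightarrow> eval_word G u v gen_a = u"
  by (simp add: eval_letter_def)

lemma eval_word_gen_b [simp]: "v \<in> carrier G \<Longrightarrow> eval_word G u v gen_b = v"
  by (simp add: eval_letter_def)

lemma eval_word_cons_red:
  assumes "u \<in> carrier G" "v \<in> carrier G"
  shows "eval_word G u v (cons_red l r) = eval_letter G u v l \<otimes> eval_word G u v r"
proof (cases r)
  case (Cons m ws)
  have cancel: "eval_letter G u v l \<otimes> eval_letter G u v (inv_letter l) = \<one>"
    using assms by (cases l) (auto simp: eval_letter_def inv_letter_def Let_def)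
  show ?thesis
  proof (cases "m = inv_letter l")
    case True
    then have "eval_letter G u v l \<otimes> eval_word G u v r
        = (eval_letter G u v l \<otimes> eval_letter G u v m) \<otimes> eval_word G u v ws"
      using Cons assms by (simp add: m_assoc)
    then show ?thesis using Cons True cancel assms by simp
  qed (use Cons in simp)
qed simp

lemma eval_word_reduce:
  "u \<in> carrier G \<Longrightarrow> v \<in> carrier G \<Longrightarrow> eval_word G u v (reduce w) = eval_word G u v w"
  by (induction w) (simp_all add: reduce_def eval_word_cons_red)

lemma eval_word_append:
  "u \<in> carrier G \<Longrightarrow> v \<in> carrier G \<Longrightarrow>
   eval_word G u v (x @ y) = eval_word G u v x \<otimes> eval_word G u v y"
  by (induction x) (auto simp: m_assoc)

lemma eval_word_hom: "u \<in> carrier G \<Longrightarrow> v \<in> carrier G \<Longrightarrow> eval_word G u v \<in> hom F2 G"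
  by (rule homI) (auto simp: eval_word_reduce eval_word_append)

end

lemma hom_free_group2_letter:
  assumes "group H" "k \<in> hom F2 H"
  shows "k [l] = eval_letter H (k gen_a) (k gen_b) l"
proof -
  interpret group_hom F2 H k
    using assms group_free_group2 by (simp add: group_hom_def group_hom_axioms_def)
  obtain x s where l: "l = (x, s)" by fastforce
  show ?thesis
  proof (cases s)
    case True
    then have "k [l] = inv\<^bsub>H\<^esub> k [(x, False)]"
      using hom_inv[of "[(x, False)]"] l by (simp add: inv_free_group2_letter)
    then show ?thesis using l True by (cases x) (auto simp: eval_letter_def)
  qed (use l in \<open>cases x; auto simp: eval_letter_def\<close>)
qed

lemma hom_free_group2_eq_eval_word:
  assumes H: "group H" and k: "k \<in> hom F2 H" and w: "reduced w"
  shows "k w = eval_word H (k gen_a) (k gen_b) w"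
  using w
proof (induction w)
  case Nil
  then show ?case using hom_one[OF k group_free_group2 H] by simp
next
  case (Cons l w)
  have "k (l # w) = k ([l] \<otimes>\<^bsub>F2\<^esub> w)"
    using reduce_reduced[OF Cons.prems] by simp
  also have "\<dots> = k [l] \<otimes>\<^bsub>H\<^esub> k w"
    using Cons.prems by (intro hom_mult[OF k]) (auto dest: reduced_ConsD)
  finally show ?case
    using Cons.IH reduced_ConsD[OF Cons.prems] hom_free_group2_letter[OF H k, of l] by simp
qed

section \<open>Primitive elements\<close>

definition primitive_free_group2 :: "letter2 list \<Rightarrow> bool" where
  "primitive_free_group2 w \<longleftrightarrow> (\<exists>h \<in> iso F2 F2. h gen_a = w)"

lemma aut_free_group2_eval_surj:
  assumes h: "h \<in> iso F2 F2" and H: "group H"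
    and s: "s \<in> carrier H" and t: "t \<in> carrier H"
  shows "\<exists>p \<in> carrier H. \<exists>q \<in> carrier H.
    eval_word H p q (h gen_a) = s \<and> eval_word H p q (h gen_b) = t"
proof -
  let ?h' = "inv_into (carrier F2) h"
  let ?\<phi> = "eval_word H s t \<circ> ?h'"
  have "?h' \<in> hom F2 F2"
    using group.iso_set_sym[OF group_free_group2 h] by (rule iso_imp_homomorphism)
  then have \<phi>: "?\<phi> \<in> hom F2 H"
    using group.eval_word_hom[OF H s t] by (rule hom_compose)
  have inv_h: "?h' (h w) = w" if "reduced w" for w
    using h that by (auto simp: iso_def bij_betw_def)
  have h_carrier: "h w \<in> carrier F2" if "reduced w" for w
    using h that by (auto simp: iso_def hom_def)
  have eval_h: "eval_word H (?\<phi> gen_a) (?\<phi> gen_b) (h w) = eval_word H s t w" if "reduced w" for w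
    using hom_free_group2_eq_eval_word[OF H \<phi>, of "h w"] h_carrier[OF that] inv_h[OF that] by simp
  show ?thesis
  proof (intro bexI conjI)
    show "eval_word H (?\<phi> gen_a) (?\<phi> gen_b) (h gen_a) = s"
      using eval_h[of gen_a] group.eval_word_gen_a[OF H s] by (simp del: eval_word_Cons)
    show "eval_word H (?\<phi> gen_a) (?\<phi> gen_b) (h gen_b) = t"
      using eval_h[of gen_b] group.eval_word_gen_b[OF H t] by (simp del: eval_word_Cons)
  qed (rule hom_in_carrier[OF \<phi>], simp)+
qed

lemma primitive_free_group2_fibre_card:
  assumes "primitive_free_group2 w" "group H" "finite (carrier H)" "s \<in> carrier H"
  shows "card (carrier H) \<le> card {(p, q) \<in> carrier H \<times> carrier H. eval_word H p q w = s}"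
    (is "_ \<le> card ?fibre")
proof -
  obtain h where h: "h \<in> iso F2 F2" and w: "h gen_a = w"
    using assms(1) by (auto simp: primitive_free_group2_def)
  let ?z = "\<lambda>(p, q). eval_word H p q (h gen_b)"
  have "?fibre \<subseteq> carrier H \<times> carrier H" by auto
  then have fin: "finite ?fibre"
    using finite_subset finite_cartesian_product assms(3) by blast
  have "t \<in> ?z ` ?fibre" if t: "t \<in> carrier H" for t
  proof -
    obtain p q where "p \<in> carrier H" "q \<in> carrier H"
        "eval_word H p q w = s" "eval_word H p q (h gen_b) = t"
      using aut_free_group2_eval_surj[OF h assms(2,4) t] w by blast
    then show ?thesis by (intro rev_image_eqI[of "(p, q)"]) auto
  qed
  then have "carrier H \<subseteq> ?z ` ?fibre" ..
  then have "card (carrier H) \<le> card (?z ` ?fibre)"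
    using fin by (intro card_mono) auto
  also have "\<dots> \<le> card ?fibre"
    using fin by (rule card_image_le)
  finally show ?thesis .
qed

section \<open>Weak homogeneity and retractions\<close>

lemma retraction_on_generate:
  assumes G: "group G" and H: "group H" and f: "f \<in> hom G H" and g: "g \<in> hom H G"
    and S: "S \<subseteq> carrier G" and gf: "\<forall>s\<in>S. g (f s) = s" and x: "x \<in> generate G S"
  shows "g (f x) = x"
proof -
  interpret gf: group_hom G G "g \<circ> f"
    using G hom_compose[OF f g] by (simp add: group_hom_def group_hom_axioms_def)
  from x show ?thesis
  proof (induction x rule: generate.induct)
    case (inv s)
    then have "(g \<circ> f) (inv\<^bsub>G\<^esub> s) = inv\<^bsub>G\<^esub> ((g \<circ> f) s)"
      using S by (intro gf.hom_inv) auto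
    then show ?case using inv gf by simp
  next
    case (eng x y)
    then have "(g \<circ> f) (x \<otimes>\<^bsub>G\<^esub> y) = (g \<circ> f) x \<otimes>\<^bsub>G\<^esub> (g \<circ> f) y"
      using group.generate_in_carrier[OF G S] by (intro gf.hom_mult) auto
    then show ?case using eng.IH by simp
  qed (use gf gf.hom_one in auto)
qed

lemma weakly_homogeneous_extends_retraction:
  assumes wh: "weakly_homogeneous G" and G: "group G"
    and S: "finite S" "S \<subseteq> carrier G"
    and f: "f \<in> hom G G" and g: "g \<in> hom G G" and gf: "\<forall>s\<in>S. g (f s) = s"
  shows "\<exists>h \<in> iso G G. \<forall>a \<in> generate G S. h a = f a"
proof -
  interpret group_hom G G f
    using G f by (simp add: group_hom_def group_hom_axioms_def)
  let ?A = "generate G S" and ?B = "generate G (f ` S)"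
  have A: "?A \<subseteq> carrier G"
    using G.generate_in_carrier[OF S(2)] by blast
  have image: "f ` ?A = ?B"
    using S(2) by (simp add: generate_img)
  have gfA: "g (f x) = x" if "x \<in> ?A" for x
    using retraction_on_generate[OF G G f g S(2) gf that] .
  then have inj: "inj_on f ?A"
    by (rule inj_on_inverseI)
  have "f \<in> iso (G\<lparr>carrier := ?A\<rparr>) (G\<lparr>carrier := ?B\<rparr>)"
  proof (rule isoI)
    show "f \<in> hom (G\<lparr>carrier := ?A\<rparr>) (G\<lparr>carrier := ?B\<rparr>)"
      using image A by (intro homI) (auto simp: subset_iff)
    show "bij_betw f (carrier (G\<lparr>carrier := ?A\<rparr>)) (carrier (G\<lparr>carrier := ?B\<rparr>))"
      using inj image by (simp add: bij_betw_def)
  qed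
  moreover have "\<forall>b \<in> ?B. g b = inv_into ?A f b"
    using image gfA inj by (auto simp flip: image)
  moreover have "fg_subgroup G ?A" "fg_subgroup G ?B"
    unfolding fg_subgroup_def using S hom_carrier[OF f] by blast+
  ultimately show ?thesis
    using wh f g unfolding weakly_homogeneous_def by blast
qed

section \<open>A non-primitive element\<close>

datatype sym3 = Id3 | T12 | T13 | T23 | C123 | C132

text \<open>Permutations of \<open>{1, 2, 3}\<close>, composed right to left.\<close>

fun sym3_mult :: "sym3 \<Rightarrow> sym3 \<Rightarrow> sym3" where
  "sym3_mult Id3 Id3 = Id3"
| "sym3_mult Id3 T12 = T12"
| "sym3_mult Id3 T13 = T13"
| "sym3_mult Id3 T23 = T23"
| "sym3_mult Id3 C123 = C123"
| "sym3_mult Id3 C132 = C132"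
| "sym3_mult T12 Id3 = T12"
| "sym3_mult T12 T12 = Id3"
| "sym3_mult T12 T13 = C132"
| "sym3_mult T12 T23 = C123"
| "sym3_mult T12 C123 = T23"
| "sym3_mult T12 C132 = T13"
| "sym3_mult T13 Id3 = T13"
| "sym3_mult T13 T12 = C123"
| "sym3_mult T13 T13 = Id3"
| "sym3_mult T13 T23 = C132"
| "sym3_mult T13 C123 = T12"
| "sym3_mult T13 C132 = T23"
| "sym3_mult T23 Id3 = T23"
| "sym3_mult T23 T12 = C132"
| "sym3_mult T23 T13 = C123"
| "sym3_mult T23 T23 = Id3"
| "sym3_mult T23 C123 = T13"
| "sym3_mult T23 C132 = T12"
| "sym3_mult C123 Id3 = C123"
| "sym3_mult C123 T12 = T13"
| "sym3_mult C123 T13 = T23"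
| "sym3_mult C123 T23 = T12"
| "sym3_mult C123 C123 = C132"
| "sym3_mult C123 C132 = Id3"
| "sym3_mult C132 Id3 = C132"
| "sym3_mult C132 T12 = T23"
| "sym3_mult C132 T13 = T12"
| "sym3_mult C132 T23 = T13"
| "sym3_mult C132 C123 = Id3"
| "sym3_mult C132 C132 = C123"

fun sym3_inv :: "sym3 \<Rightarrow> sym3" where
  "sym3_inv C123 = C132"
| "sym3_inv C132 = C123"
| "sym3_inv x = x"

definition S3 :: "sym3 monoid" where
  "S3 = \<lparr>carrier = UNIV, monoid.mult = sym3_mult, one = Id3\<rparr>"

lemma UNIV_sym3: "(UNIV :: sym3 set) = {Id3, T12, T13, T23, C123, C132}"
proof (rule UNIV_eq_I)
  fix x :: sym3
  show "x \<in> {Id3, T12, T13, T23, C123, C132}" by (cases x) simp_all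
qed

lemma S3_simps [simp]:
  "carrier S3 = UNIV"
  "x \<otimes>\<^bsub>S3\<^esub> y = sym3_mult x y"
  "\<one>\<^bsub>S3\<^esub> = Id3"
  by (simp_all add: S3_def)

lemma group_S3: "group S3"
proof (rule groupI)
  fix x y z :: sym3
  show "x \<otimes>\<^bsub>S3\<^esub> y \<otimes>\<^bsub>S3\<^esub> z = x \<otimes>\<^bsub>S3\<^esub> (y \<otimes>\<^bsub>S3\<^esub> z)"
    by (cases x; cases y; cases z) simp_all
next
  fix x :: sym3
  show "\<exists>y\<in>carrier S3. y \<otimes>\<^bsub>S3\<^esub> x = \<one>\<^bsub>S3\<^esub>"
    by (intro bexI[of _ "sym3_inv x"]) (cases x; simp)+
next
  fix x :: sym3
  show "\<one>\<^bsub>S3\<^esub> \<otimes>\<^bsub>S3\<^esub> x = x" by (cases x) simp_all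
qed simp_all

lemma inv_S3 [simp]: "inv\<^bsub>S3\<^esub> x = sym3_inv x"
  by (rule group.inv_equality[OF group_S3]) (cases x; simp)+

definition witness_word :: "letter2 list" where
  "witness_word = [(True, False), (True, False), (False, False), (True, True), (False, False)]"

lemma reduced_witness_word [simp]: "reduced witness_word"
  by (simp add: witness_word_def inv_letter_def)

lemma eval_witness_word_S3_eq_C123:
  "eval_word S3 p q witness_word = C123 \<longleftrightarrow> (p, q) \<in> {(Id3, C132), (C123, Id3), (C132, C123)}"
  by (cases p; cases q) (simp_all add: witness_word_def eval_letter_def)

lemma witness_word_fibre_S3:
  "{(p, q) \<in> carrier S3 \<times> carrier S3. eval_word S3 p q witness_word = C123}
     = {(Id3, C132), (C123, Id3), (C132, C123)}"
  unfolding eval_witness_word_S3_eq_C123 by auto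

lemma not_primitive_witness_word: "\<not> primitive_free_group2 witness_word"
proof
  assume "primitive_free_group2 witness_word"
  from primitive_free_group2_fibre_card[OF this group_S3, of C123]
  have "card (carrier S3) \<le> card {(Id3, C132), (C123, Id3), (C132, C123)}"
    unfolding witness_word_fibre_S3 by (simp add: UNIV_sym3)
  then show False by (simp add: UNIV_sym3)
qed

theorem mainTheorem6:
  shows "\<not> weakly_homogeneous free_group2"
proof
  assume wh: "weakly_homogeneous free_group2"
  let ?f = "eval_word F2 witness_word gen_b" and ?g = "eval_word F2 gen_a []"
  have f: "?f \<in> hom F2 F2" and g: "?g \<in> hom F2 F2"
    by (simp_all add: group.eval_word_hom[OF group_free_group2])
  have f_gen_a: "?f gen_a = witness_word"
    by (rule group.eval_word_gen_a[OF group_free_group2]) simp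
  have "?g witness_word = gen_a"
    by (simp add: witness_word_def eval_letter_def inv_free_group2_letter reduce_def inv_letter_def)
  then have "?g (?f s) = s" if "s \<in> {gen_a}" for s
    using that f_gen_a by simp
  then obtain h where h: "h \<in> iso F2 F2" "\<forall>a \<in> generate F2 {gen_a}. h a = ?f a"
    using weakly_homogeneous_extends_retraction[OF wh group_free_group2 _ _ f g, of "{gen_a}"] by auto
  then have "h gen_a = witness_word"
    using f_gen_a generate.incl[of gen_a "{gen_a}" F2] by (simp only: singletonI)
  with h(1) have "primitive_free_group2 witness_word"
    unfolding primitive_free_group2_def by blast
  with not_primitive_witness_word show False ..
qed

end
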